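(* Let $F:\mathbb R^5\to\mathbb R$, $$F(a,b,c,d,A)=-2(a+c)-2\bigl[(ac+bd)\cos2A+(bc-ad)\sin2A\bigr]+a^2+b^2+c^2+d^2+1,$$ and let $\mathbb S=F^{-1}(0)$. Then at every point of $\mathbb S$ with $-\pi/2<A<\pi/2$, $a^2+b^2\ne0$ and $c^2+d^2\ne0$, the gradient of $F$ is nonzero (i.e. $\mathbb S$ has no singular points there).
   Context: Here $X_1=a+bi$, $X_2=c+di$, and $F=0$ is the equation $-2\,\mathrm{Re}(X_1+X_2)-2\,\mathrm{Re}(X_1\overline{X}_2e^{-2iA})+|X_1|^2+|X_2|^2+1=0$ written in real coordinates; $\mathbb S$ is called the basic variety. A singular point of $\mathbb S$ is a point of $\mathbb S$ at which all partial derivatives of $F$ vanish. *)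

theory Defs
  imports "HOL-Analysis.Analysis"
begin

definition F :: "real \<Rightarrow> real \<Rightarrow> real \<Rightarrow> real \<Rightarrow> real \<Rightarrow> real" where
  "F a b c d A = -2*(a+c) - 2*((a*c + b*d) * cos (2*A) + (b*c - a*d) * sin (2*A))
                 + a^2 + b^2 + c^2 + d^2 + 1"

definition gradF :: "real \<Rightarrow> real \<Rightarrow> real \<Rightarrow> real \<Rightarrow> real \<Rightarrow> real list" where
  "gradF a b c d A =
     [deriv (\<lambda>x. F x b c d A) a,
      deriv (\<lambda>x. F a x c d A) b,
      deriv (\<lambda>x. F a b x d A) c,
      deriv (\<lambda>x. F a b c x A) d,
      deriv (\<lambda>x. F a b c d x) A]"

end

theory Submission
  imports Defs
begin

text \<open>At a critical point of F the equations for a and c give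
  a = 1 + c cos 2A - d sin 2A and c = 1 + a cos 2A + b sin 2A, d = b cos 2A - a sin 2A;
  substituting the latter two into the former yields cos 2A = -1, i.e. A is an odd multiple
  of pi/2. So F has no critical points at all in the strip |A| < pi/2, whether on the
  variety or not and whatever a, b, c, d are.\<close>

lemma gradF_eq:
  "gradF a b c d A =
     [2*a - 2 - 2*(c * cos (2*A) - d * sin (2*A)),
      2*b - 2*(d * cos (2*A) + c * sin (2*A)),
      2*c - 2 - 2*(a * cos (2*A) + b * sin (2*A)),
      2*d - 2*(b * cos (2*A) - a * sin (2*A)),
      deriv (\<lambda>x. F a b c d x) A]"
proof -
  have "deriv (\<lambda>x. F x b c d A) a = 2*a - 2 - 2*(c * cos (2*A) - d * sin (2*A))"
    "deriv (\<lambda>x. F a x c d A) b = 2*b - 2*(d * cos (2*A) + c * sin (2*A))"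
    "deriv (\<lambda>x. F a b x d A) c = 2*c - 2 - 2*(a * cos (2*A) + b * sin (2*A))"
    "deriv (\<lambda>x. F a b c x A) d = 2*d - 2*(b * cos (2*A) - a * sin (2*A))"
    unfolding F_def
    by (rule DERIV_imp_deriv; auto intro!: derivative_eq_intros simp: algebra_simps)+
  then show ?thesis
    unfolding gradF_def by simp
qed

lemma critical_point_cos_double_eq_minus_one:
  assumes "gradF a b c d A = [0, 0, 0, 0, 0]"
  shows "cos (2*A) = -1"
proof -
  define co sn where "co = cos (2*A)" and "sn = sin (2*A)"
  have a: "a = 1 + c*co - d * sn" and c: "c = 1 + a*co + b * sn" and d: "d = b*co - a * sn"
    using assms unfolding gradF_eq co_def sn_def by auto
  have "co^2 + sn^2 = 1"
    unfolding co_def sn_def by simp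
  moreover have "c*co - d * sn = co + a*(co^2 + sn^2)"
    by (subst c, subst d) (simp add: algebra_simps power2_eq_square)
  ultimately show ?thesis
    using a unfolding co_def by simp
qed

lemma cos_double_gt_minus_one:
  assumes "-(pi/2) < x" and "x < pi/2"
  shows "cos (2*x) > -1"
proof -
  have "cos x > 0"
    using assms by (intro cos_gt_zero_pi) auto
  then show ?thesis
    by (simp add: cos_double_cos)
qed

theorem proposition3p4:
  fixes a b c d A :: real
  assumes "F a b c d A = 0"
    and "-(pi/2) < A" and "A < pi/2"
    and "a^2 + b^2 \<noteq> 0" and "c^2 + d^2 \<noteq> 0"
  shows "gradF a b c d A \<noteq> [0, 0, 0, 0, 0]"
  using critical_point_cos_double_eq_minus_one cos_double_gt_minus_one[OF assms(2,3)]
  by force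

end
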